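(* Let $\epsilon\in(0,1)$, $u_0\in\mathbb{R}\setminus\{0,1,-1\}$, and let $h^*=\frac{\epsilon^2}{u_0^2+|u_0|}$ if $|u_0|>1$ and $h^*=\frac{\epsilon^2}{2}$ if $0<|u_0|<1$. For every $h\in(0,h^*]$, the sequence $(u_n)_{n\ge0}$ generated by the explicit Euler scheme $$\frac{u_n-u_{n-1}}{h}+\frac{1}{\epsilon^2}\big(u_{n-1}^3-u_{n-1}\big)=0,\qquad n\ge 1,$$ satisfies $E(u_n)\le E(u_{n-1})$ for all $n\ge1$, where $E(v)=\frac{1}{4\epsilon^2}(v^2-1)^2$.
   Context: The scheme discretizes the ODE $u'(t)+\frac{1}{\epsilon^2}(u^3-u)=0$, $u(0)=u_0$, whose energy is $E(u)=\frac{1}{\epsilon^2}F(u)$ with $F(u)=\frac14(u^2-1)^2$. *)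

theory Defs
  imports Complex_Main
begin

definition energy :: "real \<Rightarrow> real \<Rightarrow> real" where
  "energy eps v = (v\<^sup>2 - 1)\<^sup>2 / (4 * eps\<^sup>2)"

fun euler_seq :: "real \<Rightarrow> real \<Rightarrow> real \<Rightarrow> nat \<Rightarrow> real" where
  "euler_seq eps h u0 0 = u0"
| "euler_seq eps h u0 (Suc n) =
     (let v = euler_seq eps h u0 n in v - h / eps\<^sup>2 * (v ^ 3 - v))"

definition hstar :: "real \<Rightarrow> real \<Rightarrow> real" where
  "hstar eps u0 = (if \<bar>u0\<bar> > 1 then eps\<^sup>2 / (u0\<^sup>2 + \<bar>u0\<bar>) else eps\<^sup>2 / 2)"

end

theory Submission
  imports Defs
begin

text \<open>
  One Euler step \<open>v \<mapsto> v - k (v\<^sup>3 - v)\<close> with \<open>k = h/\<epsilon>\<^sup>2\<close> is an odd map that moves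
  \<open>\<bar>v\<bar>\<close> towards the wells \<open>\<plusminus>1\<close>. The step-size bound guarantees that it never
  overshoots: \<open>\<bar>v\<bar> \<in> [1, \<bar>u\<^sub>0\<bar>]\<close> is mapped to \<open>[1, \<bar>v\<bar>]\<close> when \<open>k (u\<^sub>0\<^sup>2 + \<bar>u\<^sub>0\<bar>) \<le> 1\<close>,
  and \<open>\<bar>v\<bar> \<le> 1\<close> is mapped to \<open>[\<bar>v\<bar>, 1]\<close> when \<open>k \<le> 1/2\<close>. Since \<open>F\<close> is increasing
  in \<open>\<bar>v\<bar>\<close> on \<open>[1, \<infinity>)\<close> and decreasing on \<open>[0, 1]\<close>, the energy cannot increase.
\<close>

definition ac_step :: "real \<Rightarrow> real \<Rightarrow> real" where
  "ac_step k v = v - k * (v ^ 3 - v)"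

lemma euler_seq_eq_funpow: "euler_seq eps h u0 n = (ac_step (h / eps\<^sup>2) ^^ n) u0"
  by (induction n) (simp_all add: ac_step_def Let_def)

lemma ac_step_minus: "ac_step k (- v) = - ac_step k v"
  by (simp add: ac_step_def algebra_simps power3_eq_cube)

lemma abs_ac_step: "\<bar>ac_step k v\<bar> = \<bar>ac_step k \<bar>v\<bar>\<bar>"
  by (cases "0 \<le> v") (simp_all add: ac_step_minus)

lemma ac_step_outer_nonneg:
  fixes k a v :: real
  assumes "0 \<le> k" "k * (a\<^sup>2 + a) \<le> 1" "1 \<le> v" "v \<le> a"
  shows "1 \<le> ac_step k v \<and> ac_step k v \<le> v"
proof -
  have "v * (v + 1) \<le> a * (a + 1)"
    using assms by (intro mult_mono) auto
  then have "k * (v * (v + 1)) \<le> k * (a * (a + 1))"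
    using assms(1) by (rule mult_left_mono)
  also have "\<dots> = k * (a\<^sup>2 + a)"
    by (simp add: power2_eq_square algebra_simps)
  finally have "0 \<le> (v - 1) * (1 - k * (v * (v + 1)))"
    using assms by simp
  moreover have "0 \<le> k * (v * (v - 1) * (v + 1))"
    using assms by simp
  ultimately show ?thesis
    by (simp add: ac_step_def algebra_simps power3_eq_cube)
qed

lemma ac_step_inner_nonneg:
  fixes k v :: real
  assumes "0 \<le> k" "k \<le> 1/2" "0 \<le> v" "v \<le> 1"
  shows "v \<le> ac_step k v \<and> ac_step k v \<le> 1"
proof -
  have "v * (v + 1) \<le> 1 * (1 + 1)"
    using assms by (intro mult_mono) auto
  then have "k * (v * (v + 1)) \<le> 1/2 * 2"
    using assms by (intro mult_mono) auto
  then have "0 \<le> (1 - v) * (1 - k * (v * (v + 1)))"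
    using assms by simp
  moreover have "0 \<le> k * (v * (1 - v) * (1 + v))"
    using assms by simp
  ultimately show ?thesis
    by (simp add: ac_step_def algebra_simps power3_eq_cube)
qed

lemma ac_step_outer:
  fixes k a v :: real
  assumes "0 \<le> k" "k * (a\<^sup>2 + a) \<le> 1" "1 \<le> \<bar>v\<bar>" "\<bar>v\<bar> \<le> a"
  shows "1 \<le> \<bar>ac_step k v\<bar> \<and> \<bar>ac_step k v\<bar> \<le> \<bar>v\<bar>"
  using ac_step_outer_nonneg[OF assms] by (simp add: abs_ac_step[of k v])

lemma ac_step_inner:
  fixes k v :: real
  assumes "0 \<le> k" "k \<le> 1/2" "\<bar>v\<bar> \<le> 1"
  shows "\<bar>v\<bar> \<le> \<bar>ac_step k v\<bar> \<and> \<bar>ac_step k v\<bar> \<le> 1"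
  using ac_step_inner_nonneg[OF assms(1,2) abs_ge_zero assms(3)]
  by (auto simp: abs_ac_step[of k v])

lemma energy_mono: "\<bar>w\<^sup>2 - 1\<bar> \<le> \<bar>v\<^sup>2 - 1\<bar> \<Longrightarrow> energy eps w \<le> energy eps v"
  unfolding energy_def by (intro divide_right_mono) (auto simp: abs_le_square_iff)

lemma energy_mono_outer:
  assumes "1 \<le> \<bar>w\<bar>" "\<bar>w\<bar> \<le> \<bar>v\<bar>"
  shows "energy eps w \<le> energy eps v"
proof (rule energy_mono)
  have "1 \<le> w\<^sup>2" "w\<^sup>2 \<le> v\<^sup>2"
    using assms abs_le_square_iff[of 1 w] by (simp_all add: abs_le_square_iff)
  then show "\<bar>w\<^sup>2 - 1\<bar> \<le> \<bar>v\<^sup>2 - 1\<bar>" by simp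
qed

lemma energy_mono_inner:
  assumes "\<bar>v\<bar> \<le> \<bar>w\<bar>" "\<bar>w\<bar> \<le> 1"
  shows "energy eps w \<le> energy eps v"
proof (rule energy_mono)
  have "w\<^sup>2 \<le> 1" "v\<^sup>2 \<le> w\<^sup>2"
    using assms abs_le_square_iff[of w 1] by (simp_all add: abs_le_square_iff)
  then show "\<bar>w\<^sup>2 - 1\<bar> \<le> \<bar>v\<^sup>2 - 1\<bar>" by simp
qed

lemma funpow_nonincreasing_on_invariant:
  assumes "P x" and step: "\<And>v. P v \<Longrightarrow> P (f v) \<and> E (f v) \<le> E v"
  shows "E ((f ^^ Suc n) x) \<le> E ((f ^^ n) x)"
proof -
  have "P ((f ^^ n) x)"
    by (induction n) (simp_all add: assms)
  then show ?thesis
    using step by simp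
qed

theorem theorem2p3:
  fixes eps u0 h :: real
  assumes "0 < eps" "eps < 1"
    and "u0 \<noteq> 0" "u0 \<noteq> 1" "u0 \<noteq> -1"
    and "0 < h" "h \<le> hstar eps u0"
  shows "\<forall>n\<ge>1. energy eps (euler_seq eps h u0 n) \<le> energy eps (euler_seq eps h u0 (n - 1))"
proof -
  define k where "k = h / eps\<^sup>2"
  have "0 \<le> k" using assms(6) by (simp add: k_def)
  have "\<exists>P. P u0 \<and> (\<forall>v. P v \<longrightarrow> P (ac_step k v) \<and> energy eps (ac_step k v) \<le> energy eps v)"
  proof (cases "\<bar>u0\<bar> > 1")
    case True
    then have "k * (\<bar>u0\<bar>\<^sup>2 + \<bar>u0\<bar>) \<le> 1"
      using assms(1,7) by (simp add: hstar_def k_def field_simps add_pos_pos)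
    then show ?thesis
      using True ac_step_outer[OF \<open>0 \<le> k\<close>] energy_mono_outer
      by (intro exI[of _ "\<lambda>v. 1 \<le> \<bar>v\<bar> \<and> \<bar>v\<bar> \<le> \<bar>u0\<bar>"]) fastforce
  next
    case False
    then have "k \<le> 1/2"
      using assms(1,7) by (simp add: hstar_def k_def field_simps)
    then show ?thesis
      using False ac_step_inner[OF \<open>0 \<le> k\<close>] energy_mono_inner
      by (intro exI[of _ "\<lambda>v. \<bar>v\<bar> \<le> 1"]) fastforce
  qed
  then obtain P where "P u0"
    and "\<And>v. P v \<Longrightarrow> P (ac_step k v) \<and> energy eps (ac_step k v) \<le> energy eps v"
    by blast
  then have "energy eps ((ac_step k ^^ Suc m) u0) \<le> energy eps ((ac_step k ^^ m) u0)" for m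
    by (rule funpow_nonincreasing_on_invariant)
  then show ?thesis
    by (auto simp: euler_seq_eq_funpow k_def dest!: Suc_le_D)
qed

end
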